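(* Let $1\le p<\infty$ and $N\ge1$. The distribution of $W_p(\mu_A,\lambda_{\mathbb{T}})$, where $A$ is Haar-distributed, is the same for $G=\mathrm{U}(N)$ and $G=\mathrm{SU}(N)$. Further, the distribution of $W_p(\mu_A,\lambda_{\mathbb{T}})$ is the same for $G=\mathrm{O}(2N+1)$ and $G=\mathrm{SO}(2N+1)$.
   Context: $A\in G$ is a random matrix distributed according to the normalized Haar measure on $G$. $\mathbb{T}=\{z\in\mathbb{C}:|z|=1\}$ with arc length metric $d(z,w)=\min\{\arg(z\bar w),2\pi-\arg(z\bar w)\}$, $\arg\in[0,2\pi)$; $\lambda_{\mathbb{T}}$ is the uniform probability measure on $\mathbb{T}$; $W_p(\mu,\nu)=\inf_\vartheta\left(\int d(z,w)^p\,\mathrm{d}\vartheta\right)^{1/p}$ over couplings $\vartheta$ of $\mu$ and $\nu$. For $G=\mathrm{U}(N),\mathrm{SU}(N)$, $\mu_A=\frac1N\sum_\lambda\delta_\lambda$ over all $N$ eigenvalues (with multiplicity). For $G=\mathrm{O}(2N+1),\mathrm{SO}(2N+1)$, $\mu_A=\frac{1}{2N}\sum_\lambda\delta_\lambda$ over the $2N$ eigenvalues remaining after removing one copy of the eigenvalue $\det A$. *)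

theory Defs
  imports "HOL-Probability.Probability"
begin

definition conj_transpose :: "complex^'n^'n \<Rightarrow> complex^'n^'n" where
  "conj_transpose A = (\<chi> i j. cnj (A $ j $ i))"

definition unitary_group :: "(complex^'n^'n) set" where
  "unitary_group = {A. A ** conj_transpose A = mat 1}"

definition special_unitary_group :: "(complex^'n^'n) set" where
  "special_unitary_group = {A. A ** conj_transpose A = mat 1 \<and> det A = 1}"

definition orthogonal_group :: "(real^'n^'n) set" where
  "orthogonal_group = {A. transpose A ** A = mat 1}"

definition special_orthogonal_group :: "(real^'n^'n) set" where
  "special_orthogonal_group = {A. transpose A ** A = mat 1 \<and> det A = 1}"

definition haar_measure_on :: "('a::real_normed_field^'n^'n) set \<Rightarrow> ('a^'n^'n) measure \<Rightarrow> bool" where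
  "haar_measure_on G M \<longleftrightarrow>
     space M = G \<and> sets M = sets (restrict_space borel G) \<and> prob_space M \<and>
     (\<forall>g\<in>G. \<forall>S\<in>sets M. emeasure M ((\<lambda>A. g ** A) -` S \<inter> space M) = emeasure M S)"

definition eigen_mset :: "complex^'n^'n \<Rightarrow> complex multiset" where
  "eigen_mset A = (THE M. \<forall>x. det (mat x - A) = prod_mset (image_mset (\<lambda>l. x - l) M))"

definition complexify :: "real^'n^'n \<Rightarrow> complex^'n^'n" where
  "complexify A = (\<chi> i j. complex_of_real (A $ i $ j))"

definition spec_measure_U :: "complex^'n^'n \<Rightarrow> complex measure" where
  "spec_measure_U A = measure_pmf (pmf_of_multiset (eigen_mset A))"

definition spec_measure_O :: "real^'n^'n \<Rightarrow> complex measure" where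
  "spec_measure_O A = measure_pmf (pmf_of_multiset
      (eigen_mset (complexify A) - {# complex_of_real (det A) #}))"

definition arg02pi :: "complex \<Rightarrow> real" where
  "arg02pi z = (if Arg z < 0 then Arg z + 2 * pi else Arg z)"

definition circ_dist :: "complex \<Rightarrow> complex \<Rightarrow> real" where
  "circ_dist z w = min (arg02pi (z * cnj w)) (2 * pi - arg02pi (z * cnj w))"

definition lambda_T :: "complex measure" where
  "lambda_T = distr (uniform_measure lborel {0..<2 * pi}) borel (\<lambda>t. cis t)"

definition couplings :: "complex measure \<Rightarrow> complex measure \<Rightarrow> (complex \<times> complex) measure set" where
  "couplings \<mu> \<nu> = {\<theta>. sets \<theta> = sets (borel :: (complex \<times> complex) measure) \<and> prob_space \<theta> \<and>
      (\<forall>S\<in>sets (borel :: complex measure).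
         emeasure \<theta> (S \<times> UNIV) = emeasure \<mu> S \<and> emeasure \<theta> (UNIV \<times> S) = emeasure \<nu> S)}"

definition wasserstein :: "real \<Rightarrow> complex measure \<Rightarrow> complex measure \<Rightarrow> real" where
  "wasserstein p \<mu> \<nu> =
     (enn2real (INF \<theta>\<in>couplings \<mu> \<nu>. \<integral>\<^sup>+ zw. ennreal (circ_dist (fst zw) (snd zw) powr p) \<partial>\<theta>))
       powr (1 / p)"

end

theory Submission
  imports
    Defs
    "HOL-Computational_Algebra.Fundamental_Theorem_Algebra"
    "HOL-Complex_Analysis.Cauchy_Integral_Theorem"
begin

text \<open>
  For A in U(N) choose c = cis(-Arg(det A)/N); then c A lies in SU(N), and the map
  A \<mapsto> c A is a measurable retraction of U(N) onto SU(N) commuting with left multiplication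
  by SU(N). It therefore pushes the Haar measure of U(N) to a left-invariant probability
  measure on SU(N), which is the Haar measure of SU(N) by uniqueness. Multiplying A by the
  unimodular scalar c rotates all eigenvalues by c, and both the arc-length metric and the
  uniform measure on the circle are rotation invariant, so W_p(\<mu>_A, \<lambda>) does not change.
  For O(2N+1) the retraction is A \<mapsto> det(A) A, which lands in SO(2N+1) because the dimension
  is odd; when det A = -1 it negates all eigenvalues and turns the removed eigenvalue -1
  into 1. The argument works for every exponent p.
\<close>

section \<open>Haar measures on matrix groups\<close>

lemma continuous_on_matrix_mult:
  "continuous_on UNIV (\<lambda>p::('a::real_normed_field^'n^'m) \<times> ('a^'k^'n). fst p ** snd p)"
  unfolding matrix_matrix_mult_def by (intro continuous_intros)

lemma haar_measure_onD:
  assumes "haar_measure_on G M"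
  shows "space M = G" "sets M = sets (restrict_space borel G)" "prob_space M"
    and "\<And>g S. g \<in> G \<Longrightarrow> S \<in> sets M \<Longrightarrow> emeasure M ((\<lambda>A. g ** A) -` S \<inter> G) = emeasure M S"
  using assms unfolding haar_measure_on_def by auto

lemma measurable_ident_restrict_borel:
  "sets M = sets (restrict_space borel G) \<Longrightarrow> (\<lambda>x. x) \<in> borel_measurable M"
  by (metis measurable_cong_sets measurable_ident_sets measurable_restrict_space1)

text \<open>No measurability of f is assumed (none is known for the Wasserstein distance); the
  reflection hypothesis makes non-measurable preimages correspond.\<close>

lemma distr_distr_reflecting:
  assumes \<pi>: "\<pi> \<in> M \<rightarrow>\<^sub>M K"
    and reflect: "\<And>X. X \<subseteq> space K \<Longrightarrow> \<pi> -` X \<inter> space M \<in> sets M \<Longrightarrow> X \<in> sets K"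
  shows "distr (distr M K \<pi>) N f = distr M N (\<lambda>x. f (\<pi> x))"
  unfolding distr_def[of _ N]
proof (rule measure_of_eq[OF sets.space_closed])
  fix A
  define X where "X = f -` A \<inter> space K"
  have "\<pi> -` X \<inter> space M = (\<lambda>x. f (\<pi> x)) -` A \<inter> space M"
    using measurable_space[OF \<pi>] by (auto simp: X_def)
  moreover have "emeasure (distr M K \<pi>) X = emeasure M (\<pi> -` X \<inter> space M)"
  proof (cases "X \<in> sets K")
    case True
    then show ?thesis by (rule emeasure_distr[OF \<pi>])
  next
    case False
    then have "\<pi> -` X \<inter> space M \<notin> sets M"
      using reflect[of X] by (auto simp: X_def)
    then show ?thesis using False by (simp add: emeasure_notin_sets)
  qed
  ultimately show "emeasure (distr M K \<pi>) (f -` A \<inter> space (distr M K \<pi>))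
      = emeasure M ((\<lambda>x. f (\<pi> x)) -` A \<inter> space M)"
    by (simp add: X_def)
qed

lemma retraction_reflects_restrict_borel:
  assumes "G \<subseteq> H" and retract: "\<And>A. A \<in> G \<Longrightarrow> \<pi> A = A"
    and "X \<subseteq> G" and "\<pi> -` X \<inter> H \<in> sets (restrict_space borel H)"
  shows "X \<in> sets (restrict_space borel G)"
proof -
  obtain B where B: "B \<in> sets borel" "\<pi> -` X \<inter> H = H \<inter> B"
    using assms(4) by (auto simp: sets_restrict_space)
  have "A \<in> X \<longleftrightarrow> A \<in> B" if "A \<in> G" for A
  proof -
    have "A \<in> X \<longleftrightarrow> A \<in> \<pi> -` X \<inter> H" using that assms(1) retract by auto
    then show ?thesis using that assms(1) B(2) by blast
  qed
  then have "X = G \<inter> B" using assms(3) by blast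
  then show ?thesis using B(1) by (auto simp: sets_restrict_space)
qed

locale matrix_group =
  fixes G :: "('a::{real_normed_field,euclidean_space}^'n^'n) set"
    and adj :: "'a^'n^'n \<Rightarrow> 'a^'n^'n"
  assumes mult_closed: "a \<in> G \<Longrightarrow> b \<in> G \<Longrightarrow> a ** b \<in> G"
    and adj_closed: "a \<in> G \<Longrightarrow> adj a \<in> G"
    and adj_mult: "adj (a ** b) = adj b ** adj a"
    and adj_adj: "adj (adj a) = a"
    and continuous_adj: "continuous_on UNIV adj"
begin

lemma measurable_adj: "adj \<in> restrict_space borel G \<rightarrow>\<^sub>M restrict_space borel G"
  by (intro measurable_restrict_space3 borel_measurable_continuous_onI[OF continuous_adj])
    (auto intro: adj_closed)

lemma pair_preimage_adj_mult_in_sets: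
  assumes sets_M: "sets M = sets (restrict_space borel G)"
    and sets_N: "sets N = sets (restrict_space borel G)"
    and S: "S \<in> sets (restrict_space borel G)"
  shows "{p \<in> G \<times> G. adj (snd p) ** fst p \<in> S} \<in> sets (M \<Otimes>\<^sub>M N)"
proof -
  have space_M: "space M = G" and space_N: "space N = G"
    using sets_eq_imp_space_eq[OF sets_M] sets_eq_imp_space_eq[OF sets_N]
    by (simp_all add: space_restrict_space)
  have "(\<lambda>p. (adj (snd p), fst p)) \<in> borel_measurable (M \<Otimes>\<^sub>M N)"
    using measurable_ident_restrict_borel[OF sets_M] measurable_ident_restrict_borel[OF sets_N]
      borel_measurable_continuous_onI[OF continuous_adj]
    by (intro borel_measurable_Pair measurable_compose[OF measurable_snd]
        measurable_compose[OF measurable_fst]) (auto intro: measurable_compose)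
  from borel_measurable_continuous_on[OF continuous_on_matrix_mult this]
  have "(\<lambda>p. adj (snd p) ** fst p) \<in> borel_measurable (M \<Otimes>\<^sub>M N)" by simp
  moreover obtain B where "B \<in> sets borel" "S = G \<inter> B"
    using S by (auto simp: sets_restrict_space)
  moreover have "{p \<in> G \<times> G. adj (snd p) ** fst p \<in> G \<inter> B}
      = (\<lambda>p. adj (snd p) ** fst p) -` B \<inter> space (M \<Otimes>\<^sub>M N)"
    using mult_closed adj_closed by (auto simp: space_pair_measure space_M space_N)
  ultimately show ?thesis by (simp add: measurable_sets)
qed

text \<open>Fubini for the indicator of adj y ** x \<in> S: integrating over y first uses the
  invariance of \<mu>, integrating over x first that of \<nu>.\<close>

lemma haar_measure_on_eq_emeasure_adj_preimage:
  assumes haar_\<mu>: "haar_measure_on G \<mu>" and haar_\<nu>: "haar_measure_on G \<nu>"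
    and S: "S \<in> sets \<nu>"
  shows "emeasure \<nu> S = emeasure \<mu> {z \<in> G. adj z \<in> S}"
proof -
  note \<mu> = haar_measure_onD[OF haar_\<mu>] and \<nu> = haar_measure_onD[OF haar_\<nu>]
  interpret \<mu>: prob_space \<mu> by fact
  interpret \<nu>: prob_space \<nu> by fact
  interpret pair_sigma_finite \<nu> \<mu> ..
  define S' where "S' = {z \<in> G. adj z \<in> S}"
  have "S' = adj -` S \<inter> space (restrict_space borel G)"
    unfolding S'_def by (auto simp: space_restrict_space)
  then have S': "S' \<in> sets \<mu>"
    using measurable_sets[OF measurable_adj] S by (simp add: \<mu> \<nu>)
  define X where "X = {p \<in> G \<times> G. adj (snd p) ** fst p \<in> S}"
  have X: "X \<in> sets (\<nu> \<Otimes>\<^sub>M \<mu>)"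
    unfolding X_def using S by (intro pair_preimage_adj_mult_in_sets) (simp_all add: \<mu> \<nu>)
  have "emeasure (\<nu> \<Otimes>\<^sub>M \<mu>) X = (\<integral>\<^sup>+x. emeasure \<mu> (Pair x -` X) \<partial>\<nu>)"
    by (rule \<mu>.emeasure_pair_measure_alt[OF X])
  also have "\<dots> = (\<integral>\<^sup>+x. emeasure \<mu> S' \<partial>\<nu>)"
  proof (rule nn_integral_cong)
    fix x assume "x \<in> space \<nu>"
    then have x: "x \<in> G" by (simp add: \<nu>)
    have "Pair x -` X = (\<lambda>A. adj x ** A) -` S' \<inter> G"
      using x by (auto simp: X_def S'_def adj_mult adj_adj intro: mult_closed adj_closed)
    then show "emeasure \<mu> (Pair x -` X) = emeasure \<mu> S'"
      using \<mu>(4)[OF adj_closed[OF x] S'] by simp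
  qed
  also have "\<dots> = emeasure \<mu> S'" by (simp add: \<nu>.emeasure_space_1)
  finally have "emeasure (\<nu> \<Otimes>\<^sub>M \<mu>) X = emeasure \<mu> S'" .
  moreover have "emeasure (\<nu> \<Otimes>\<^sub>M \<mu>) X = (\<integral>\<^sup>+y. emeasure \<nu> ((\<lambda>x. (x, y)) -` X) \<partial>\<mu>)"
    by (rule emeasure_pair_measure_alt2[OF X])
  moreover have "\<dots> = (\<integral>\<^sup>+y. emeasure \<nu> S \<partial>\<mu>)"
  proof (rule nn_integral_cong)
    fix y assume "y \<in> space \<mu>"
    then have y: "y \<in> G" by (simp add: \<mu>)
    have "(\<lambda>x. (x, y)) -` X = (\<lambda>A. adj y ** A) -` S \<inter> G"
      using y by (auto simp: X_def)
    then show "emeasure \<nu> ((\<lambda>x. (x, y)) -` X) = emeasure \<nu> S"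
      using \<nu>(4)[OF adj_closed[OF y] S] by simp
  qed
  ultimately show ?thesis by (simp add: \<mu>.emeasure_space_1 S'_def)
qed

lemma haar_measure_on_unique:
  assumes "haar_measure_on G \<mu>" "haar_measure_on G \<nu>"
  shows "\<mu> = \<nu>"
proof (rule measure_eqI)
  show sets_eq: "sets \<mu> = sets \<nu>"
    using assms by (simp add: haar_measure_onD)
  fix S assume S: "S \<in> sets \<mu>"
  then have "S \<in> sets \<nu>" using sets_eq by simp
  then have "emeasure \<nu> S = emeasure \<mu> {z \<in> G. adj z \<in> S}"
    by (rule haar_measure_on_eq_emeasure_adj_preimage[OF assms])
  moreover have "emeasure \<mu> S = emeasure \<mu> {z \<in> G. adj z \<in> S}"
    using S by (rule haar_measure_on_eq_emeasure_adj_preimage[OF assms(1) assms(1)])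
  ultimately show "emeasure \<mu> S = emeasure \<nu> S" by simp
qed

lemma haar_measure_on_distr_equivariant:
  assumes haar_H: "haar_measure_on H MH" and "G \<subseteq> H"
    and mult_closed_H: "\<And>a b. a \<in> H \<Longrightarrow> b \<in> H \<Longrightarrow> a ** b \<in> H"
    and \<pi>: "\<pi> \<in> restrict_space borel H \<rightarrow>\<^sub>M restrict_space borel G"
    and equivariant: "\<And>g A. g \<in> G \<Longrightarrow> A \<in> H \<Longrightarrow> \<pi> (g ** A) = g ** \<pi> A"
  shows "haar_measure_on G (distr MH (restrict_space borel G) \<pi>)"
  unfolding haar_measure_on_def
proof (intro conjI ballI)
  let ?D = "distr MH (restrict_space borel G) \<pi>"
  note H = haar_measure_onD[OF haar_H]
  have \<pi>_MH: "\<pi> \<in> MH \<rightarrow>\<^sub>M restrict_space borel G"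
    using \<pi> by (simp add: measurable_cong_sets[OF H(2) refl])
  have \<pi>_G: "\<pi> A \<in> G" if "A \<in> H" for A
    using measurable_space[OF \<pi>] that by (simp add: space_restrict_space)
  show "space ?D = G" "sets ?D = sets (restrict_space borel G)"
    by (simp_all add: space_restrict_space)
  show "prob_space ?D"
    by (rule prob_space.prob_space_distr[OF H(3) \<pi>_MH])
  fix g S assume g: "g \<in> G" and "S \<in> sets ?D"
  then have S: "S \<in> sets (restrict_space borel G)" by simp
  have "continuous_on UNIV (\<lambda>A. g ** A)"
    unfolding matrix_matrix_mult_def by (intro continuous_intros)
  then have "(\<lambda>A. g ** A) \<in> restrict_space borel G \<rightarrow>\<^sub>M restrict_space borel G"
    using g mult_closed by (intro measurable_restrict_space3 borel_measurable_continuous_onI) auto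
  from measurable_sets[OF this S]
  have gS: "(\<lambda>A. g ** A) -` S \<inter> G \<in> sets (restrict_space borel G)"
    by (simp add: space_restrict_space)
  have "\<pi> -` ((\<lambda>A. g ** A) -` S \<inter> G) \<inter> H = (\<lambda>A. g ** A) -` (\<pi> -` S \<inter> H) \<inter> H"
    using g \<open>G \<subseteq> H\<close> \<pi>_G mult_closed_H equivariant by auto
  then have "emeasure ?D ((\<lambda>A. g ** A) -` S \<inter> space ?D)
      = emeasure MH ((\<lambda>A. g ** A) -` (\<pi> -` S \<inter> H) \<inter> H)"
    using gS by (simp add: emeasure_distr[OF \<pi>_MH] space_restrict_space H(1))
  also have "\<dots> = emeasure MH (\<pi> -` S \<inter> H)"
    using g \<open>G \<subseteq> H\<close> measurable_sets[OF \<pi>_MH S] by (intro H(4)) (auto simp: H(1))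
  also have "\<dots> = emeasure ?D S"
    using S by (simp add: emeasure_distr[OF \<pi>_MH] H(1))
  finally show "emeasure ?D ((\<lambda>A. g ** A) -` S \<inter> space ?D) = emeasure ?D S" .
qed

lemma distr_haar_eq_of_equivariant_retraction:
  assumes haar_H: "haar_measure_on H MH" and haar_G: "haar_measure_on G MG"
    and "G \<subseteq> H" and mult_closed_H: "\<And>a b. a \<in> H \<Longrightarrow> b \<in> H \<Longrightarrow> a ** b \<in> H"
    and \<pi>: "\<pi> \<in> restrict_space borel H \<rightarrow>\<^sub>M restrict_space borel G"
    and retract: "\<And>A. A \<in> G \<Longrightarrow> \<pi> A = A"
    and equivariant: "\<And>g A. g \<in> G \<Longrightarrow> A \<in> H \<Longrightarrow> \<pi> (g ** A) = g ** \<pi> A"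
    and invariant: "\<And>A. A \<in> H \<Longrightarrow> f (\<pi> A) = f A"
  shows "distr MH N f = distr MG N f"
proof -
  note H = haar_measure_onD[OF haar_H]
  have \<pi>_MH: "\<pi> \<in> MH \<rightarrow>\<^sub>M restrict_space borel G"
    using \<pi> by (simp add: measurable_cong_sets[OF H(2) refl])
  have "distr MH N f = distr MH N (\<lambda>A. f (\<pi> A))"
    by (rule distr_cong) (simp_all add: H(1) invariant)
  also have "\<dots> = distr (distr MH (restrict_space borel G) \<pi>) N f"
  proof (rule distr_distr_reflecting[OF \<pi>_MH, symmetric])
    fix X assume "X \<subseteq> space (restrict_space borel G)" "\<pi> -` X \<inter> space MH \<in> sets MH"
    then show "X \<in> sets (restrict_space borel G)"
      using \<open>G \<subseteq> H\<close> retract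
      by (intro retraction_reflects_restrict_borel[of G H \<pi>])
        (simp_all add: H(1,2) space_restrict_space)
  qed
  also have "distr MH (restrict_space borel G) \<pi> = MG"
    using haar_measure_on_distr_equivariant[OF haar_H \<open>G \<subseteq> H\<close> mult_closed_H \<pi> equivariant] haar_G
    by (rule haar_measure_on_unique)
  finally show ?thesis .
qed

end

section \<open>Scalar multiples and eigenvalues\<close>

definition matrix_scale :: "'a::times \<Rightarrow> 'a^'n^'m \<Rightarrow> 'a^'n^'m" where
  "matrix_scale c A = (\<chi> i j. c * A $ i $ j)"

lemma matrix_scale_1 [simp]: "matrix_scale 1 A = (A :: 'a::monoid_mult^'n^'m)"
  unfolding matrix_scale_def by simp

lemma det_matrix_scale: "det (matrix_scale c A) = c ^ CARD('n) * det (A :: 'a::comm_ring_1^'n^'n)"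
  unfolding det_def matrix_scale_def by (simp add: sum_distrib_left prod.distrib mult.left_commute)

lemma matrix_mult_matrix_scale:
  "B ** matrix_scale c A = matrix_scale c (B ** A :: 'a::comm_semiring_1^'n^'m)"
  by (simp add: matrix_scale_def matrix_matrix_mult_def vec_eq_iff sum_distrib_left algebra_simps)

lemma matrix_scale_mult_matrix_scale:
  "matrix_scale c A ** matrix_scale d B
    = matrix_scale (c * d) (A ** B :: 'a::comm_semiring_1^'n^'m)"
  by (simp add: matrix_scale_def matrix_matrix_mult_def vec_eq_iff sum_distrib_left algebra_simps)

lemma mat_minus_matrix_scale:
  "mat x - matrix_scale c A = matrix_scale c (mat (x / c) - A :: 'a::field^'n^'n)" if "c \<noteq> 0"
  using that by (simp add: matrix_scale_def mat_def vec_eq_iff algebra_simps)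

lemma transpose_matrix_scale: "transpose (matrix_scale c A) = matrix_scale c (transpose A)"
  by (simp add: transpose_def matrix_scale_def)

lemma complexify_matrix_scale:
  "complexify (matrix_scale r A) = matrix_scale (complex_of_real r) (complexify A)"
  by (simp add: matrix_scale_def complexify_def)

lemma continuous_on_det: "continuous_on UNIV (det :: 'a::real_normed_field^'n^'n \<Rightarrow> 'a)"
  unfolding det_def by (intro continuous_intros)

lemma borel_measurable_matrix_scale:
  assumes "c \<in> borel_measurable borel"
  shows "(\<lambda>A. matrix_scale (c A) A :: 'a::{real_normed_field,euclidean_space}^'n^'m)
    \<in> borel_measurable borel"
proof -
  have cont: "continuous_on UNIV (\<lambda>x :: 'a \<times> ('a^'n^'m). matrix_scale (fst x) (snd x))"
    unfolding matrix_scale_def by (intro continuous_intros)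
  show ?thesis
    by (rule borel_measurable_continuous_Pair[OF assms _ cont]) simp
qed

definition charmatrix :: "'a::comm_ring_1^'n^'n \<Rightarrow> 'a poly^'n^'n" where
  "charmatrix A = mat [:0, 1:] - (\<chi> i j. [:A $ i $ j:])"

definition charpoly :: "'a::comm_ring_1^'n^'n \<Rightarrow> 'a poly" where
  "charpoly A = det (charmatrix A)"

lemma poly_charmatrix: "poly (charmatrix A $ i $ j) x = (mat x - A) $ i $ j"
  by (simp add: charmatrix_def mat_def)

lemma poly_charpoly: "poly (charpoly A) x = det (mat x - A)"
  unfolding charpoly_def det_def by (simp add: poly_sum poly_prod poly_charmatrix of_int_poly)

lemma charmatrix_diag: "charmatrix A $ i $ i = [:- A $ i $ i, 1:]"
  by (simp add: charmatrix_def mat_def)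

lemma degree_charmatrix_le: "degree (charmatrix A $ i $ j) \<le> (if i = j then 1 else 0)"
  by (simp add: charmatrix_def mat_def)

lemma degree_charpoly_summand_le:
  "degree (\<Prod>i\<in>UNIV. charmatrix A $ i $ \<sigma> i) \<le> card {i. \<sigma> i = i}"
proof -
  have "degree (\<Prod>i\<in>UNIV. charmatrix A $ i $ \<sigma> i) \<le> (\<Sum>i\<in>UNIV. degree (charmatrix A $ i $ \<sigma> i))"
    using degree_prod_sum_le[of UNIV "\<lambda>i. charmatrix A $ i $ \<sigma> i"] by (simp add: o_def)
  also have "\<dots> \<le> (\<Sum>i\<in>UNIV. if \<sigma> i = i then 1 else 0)"
    using degree_charmatrix_le[of A] by (intro sum_mono) (metis (full_types))
  also have "\<dots> = card {i. \<sigma> i = i}"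
    by (simp add: sum.If_cases)
  finally show ?thesis .
qed

lemma coeff_charpoly_summand:
  fixes A :: "'a::idom^'n^'n"
  shows "coeff (\<Prod>i\<in>UNIV. charmatrix A $ i $ \<sigma> i) CARD('n) = (if \<sigma> = id then 1 else 0)"
proof (cases "\<sigma> = id")
  case True
  have "lead_coeff (\<Prod>i\<in>UNIV. [:- A $ i $ i, 1:]) = 1"
    by (simp add: lead_coeff_prod)
  moreover have "degree (\<Prod>i\<in>(UNIV::'n set). [:- A $ i $ i, 1:]) = CARD('n)"
    by (subst degree_prod_eq_sum_degree) auto
  ultimately show ?thesis using True by (simp add: charmatrix_diag)
next
  case False
  then obtain k where "\<sigma> k \<noteq> k" by (metis eq_id_iff)
  then have "card {i. \<sigma> i = i} < CARD('n)"
    by (intro psubset_card_mono) auto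
  then show ?thesis using False degree_charpoly_summand_le[of A \<sigma>]
    by (simp add: coeff_eq_0)
qed

lemma degree_charpoly_le: "degree (charpoly (A :: 'a::comm_ring_1^'n^'n)) \<le> CARD('n)"
proof -
  have "degree (of_int (sign \<sigma>) * (\<Prod>i\<in>UNIV. charmatrix A $ i $ \<sigma> i)) \<le> CARD('n)" for \<sigma>
  proof -
    have "degree (of_int (sign \<sigma>) * (\<Prod>i\<in>UNIV. charmatrix A $ i $ \<sigma> i))
        \<le> degree (\<Prod>i\<in>UNIV. charmatrix A $ i $ \<sigma> i)"
      by (simp add: of_int_poly degree_smult_le)
    also have "\<dots> \<le> card {i. \<sigma> i = i}"
      by (rule degree_charpoly_summand_le)
    also have "\<dots> \<le> CARD('n)"
      by (rule card_mono) auto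
    finally show ?thesis .
  qed
  then show ?thesis
    unfolding charpoly_def det_def by (intro degree_sum_le) auto
qed

lemma coeff_charpoly_CARD: "coeff (charpoly (A :: 'a::idom^'n^'n)) CARD('n) = 1"
proof -
  have "coeff (charpoly A) CARD('n)
      = (\<Sum>\<sigma>\<in>{\<sigma>. \<sigma> permutes (UNIV :: 'n set)}. of_int (sign \<sigma>) * (if \<sigma> = id then 1 else 0))"
    unfolding charpoly_def det_def
    by (simp add: coeff_sum of_int_poly coeff_charpoly_summand del: of_int_mult)
  also have "\<dots> = (\<Sum>\<sigma>\<in>{\<sigma>. \<sigma> permutes (UNIV :: 'n set)}. if \<sigma> = id then 1 else 0)"
    by (intro sum.cong) (auto simp: sign_id)
  also have "\<dots> = 1"
    by (simp add: permutes_id)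
  finally show ?thesis .
qed

lemma degree_charpoly: "degree (charpoly (A :: 'a::idom^'n^'n)) = CARD('n)"
  using degree_charpoly_le[of A] coeff_charpoly_CARD[of A]
  by (metis le_antisym le_degree one_neq_zero)

lemma lead_coeff_charpoly: "lead_coeff (charpoly (A :: 'a::idom^'n^'n)) = 1"
  by (simp add: degree_charpoly coeff_charpoly_CARD)

lemma proots_prod_mset_linear: "proots (\<Prod>l\<in>#M. [:- l, 1:]) = (M :: 'a::idom multiset)"
proof (induction M)
  case (add x M)
  have "(\<Prod>l\<in>#M. [:- l, 1:]) \<noteq> 0"
    by (auto simp: prod_mset_zero_iff)
  with add.IH show ?case by (simp add: proots_mult del: mult_pCons_left)
qed simp

lemma charpoly_eq_prod_proots:
  "charpoly A = (\<Prod>l\<in>#proots (charpoly A). [:- l, 1:])" for A :: "complex^'n^'n"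
  using complex_poly_decompose_multiset[of "charpoly A"] by (simp add: lead_coeff_charpoly)

lemma det_mat_minus_eq_prod_proots:
  "det (mat x - A) = (\<Prod>l\<in>#proots (charpoly A). x - l)" for A :: "complex^'n^'n"
proof -
  have "det (mat x - A) = poly (\<Prod>l\<in>#proots (charpoly A). [:- l, 1:]) x"
    by (subst charpoly_eq_prod_proots[symmetric]) (simp add: poly_charpoly)
  then show ?thesis by (simp add: poly_prod_mset)
qed

lemma proots_charpoly_unique:
  fixes A :: "complex^'n^'n"
  assumes "\<And>x. det (mat x - A) = (\<Prod>l\<in>#M. x - l)"
  shows "M = proots (charpoly A)"
proof -
  have "poly (charpoly A) = poly (\<Prod>l\<in>#M. [:- l, 1:])"
    using assms by (simp add: fun_eq_iff poly_charpoly poly_prod_mset)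
  then have "charpoly A = (\<Prod>l\<in>#M. [:- l, 1:])"
    by (simp add: poly_eq_poly_eq_iff)
  then show ?thesis by (simp add: proots_prod_mset_linear)
qed

lemma eigen_mset_eq_proots: "eigen_mset A = proots (charpoly A)"
  unfolding eigen_mset_def
proof (rule the_equality)
  show "\<forall>x. det (mat x - A) = (\<Prod>l\<in>#proots (charpoly A). x - l)"
    by (simp add: det_mat_minus_eq_prod_proots)
qed (simp add: proots_charpoly_unique)

lemma eigen_mset_eqI:
  "(\<And>x. det (mat x - A) = (\<Prod>l\<in>#M. x - l)) \<Longrightarrow> eigen_mset A = M"
  using proots_charpoly_unique[of A M] by (simp add: eigen_mset_eq_proots)

lemma det_mat_minus_eq_prod_eigen_mset: "det (mat x - A) = (\<Prod>l\<in>#eigen_mset A. x - l)"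
  by (simp add: eigen_mset_eq_proots det_mat_minus_eq_prod_proots)

lemma size_eigen_mset: "size (eigen_mset (A :: complex^'n^'n)) = CARD('n)"
  by (simp add: eigen_mset_eq_proots size_proots_complex degree_charpoly)

lemma eigen_mset_matrix_scale:
  assumes "c \<noteq> 0"
  shows "eigen_mset (matrix_scale c A) = image_mset ((*) c) (eigen_mset A)"
proof (rule eigen_mset_eqI)
  fix x
  have "det (mat x - matrix_scale c A) = c ^ size (eigen_mset A) * det (mat (x / c) - A)"
    using assms by (simp add: mat_minus_matrix_scale det_matrix_scale size_eigen_mset)
  also have "\<dots> = (\<Prod>l\<in>#eigen_mset A. c * (x / c - l))"
    by (simp add: det_mat_minus_eq_prod_eigen_mset prod_mset.distrib)
  also have "\<dots> = (\<Prod>l\<in>#image_mset ((*) c) (eigen_mset A). x - l)"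
    using assms by (simp add: image_mset.compositionality o_def algebra_simps)
  finally show "det (mat x - matrix_scale c A) = (\<Prod>l\<in>#image_mset ((*) c) (eigen_mset A). x - l)" .
qed

lemma map_pmf_of_multiset:
  assumes "M \<noteq> {#}"
  shows "map_pmf f (pmf_of_multiset M) = pmf_of_multiset (image_mset f M)"
proof (rule pmf_eqI)
  fix x
  let ?P = "pmf_of_multiset M"
  have "pmf (map_pmf f ?P) x = measure ?P (f -` {x} \<inter> set_pmf ?P)"
    by (simp only: pmf_map measure_Int_set_pmf)
  also have "\<dots> = (\<Sum>y\<in>f -` {x} \<inter> set_mset M. pmf ?P y)"
    using assms by (simp add: measure_measure_pmf_finite)
  also have "\<dots> = (\<Sum>y\<in>f -` {x} \<inter> set_mset M. count M y) / size M"
    using assms by (simp add: sum_divide_distrib)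
  also have "\<dots> = pmf (pmf_of_multiset (image_mset f M)) x"
    using assms by (simp add: count_image_mset)
  finally show "pmf (map_pmf f ?P) x = pmf (pmf_of_multiset (image_mset f M)) x" .
qed

section \<open>Rotation invariance on the circle\<close>

lemma borel_measurable_Arg [measurable]: "Arg \<in> borel_measurable borel"
  unfolding Arg_def[abs_def] by measurable

lemma borel_measurable_arg02pi [measurable]: "arg02pi \<in> borel_measurable borel"
  unfolding arg02pi_def[abs_def] by measurable

lemma borel_measurable_circ_dist [measurable]:
  "(\<lambda>p. circ_dist (fst p) (snd p)) \<in> borel_measurable borel"
proof -
  have "(\<lambda>p. fst p * cnj (snd p)) \<in> borel_measurable (borel :: (complex \<times> complex) measure)"
    by (intro borel_measurable_continuous_onI continuous_intros)
  then show ?thesis unfolding circ_dist_def by measurable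
qed

lemma circ_dist_mult_left:
  assumes "norm c = 1"
  shows "circ_dist (c * z) (c * w) = circ_dist z w"
proof -
  have "c * cnj c = 1" using assms by (metis complex_norm_square norm_one of_real_1 power_one)
  then have "c * z * cnj (c * w) = z * cnj w" by (simp add: algebra_simps)
  then show ?thesis by (simp only: circ_dist_def)
qed

lemma emeasure_lborel_vimage_plus:
  "X \<in> sets borel \<Longrightarrow> emeasure lborel ((\<lambda>t. a + t) -` X) = emeasure lborel (X :: real set)"
  by (subst (2) lborel_distr_plus[of a, symmetric]) (simp add: emeasure_distr)

lemma emeasure_lborel_periodic_shift:
  fixes B :: "real set"
  assumes B: "B \<in> sets borel" and periodic: "\<And>t. t \<in> B \<longleftrightarrow> t + T \<in> B"
    and a: "0 \<le> a" "a \<le> T"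
  shows "emeasure lborel ({0..<T} \<inter> {t. a + t \<in> B}) = emeasure lborel ({0..<T} \<inter> B)"
proof -
  have "{0..<T} \<inter> {t. a + t \<in> B} = (\<lambda>t. a + t) -` ({a..<T} \<inter> B \<union> {T..<T + a} \<inter> B)"
    using a by auto
  then have "emeasure lborel ({0..<T} \<inter> {t. a + t \<in> B})
      = emeasure lborel ({a..<T} \<inter> B \<union> {T..<T + a} \<inter> B)"
    using B by (simp only: emeasure_lborel_vimage_plus sets.Un sets.Int atLeastLessThan_borel)
  also have "\<dots> = emeasure lborel ({a..<T} \<inter> B) + emeasure lborel ({T..<T + a} \<inter> B)"
    using B by (intro plus_emeasure[symmetric]) auto
  also have "{T..<T + a} \<inter> B = (\<lambda>t. - T + t) -` ({0..<a} \<inter> B)"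
  proof (intro set_eqI)
    fix x show "x \<in> {T..<T + a} \<inter> B \<longleftrightarrow> x \<in> (\<lambda>t. - T + t) -` ({0..<a} \<inter> B)"
      using periodic[of "x - T"] by auto
  qed
  also have "emeasure lborel \<dots> = emeasure lborel ({0..<a} \<inter> B)"
    using B by (intro emeasure_lborel_vimage_plus) simp
  also have "emeasure lborel ({a..<T} \<inter> B) + \<dots> = emeasure lborel ({0..<T} \<inter> B)"
    using a B by (subst plus_emeasure) (auto intro: arg_cong[where f = "emeasure lborel"])
  finally show ?thesis .
qed

lemma emeasure_lambda_T:
  assumes "S \<in> sets borel"
  shows "emeasure lambda_T S = emeasure lborel ({0..<2 * pi} \<inter> cis -` S) / ennreal (2 * pi)"
proof -
  let ?U = "uniform_measure lborel {0..<2 * pi}"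
  have cis_borel: "cis \<in> borel_measurable borel"
    by (intro borel_measurable_continuous_onI continuous_on_cis continuous_on_id)
  then have "cis \<in> ?U \<rightarrow>\<^sub>M borel"
    by (simp add: measurable_cong_sets[OF sets_uniform_measure refl])
  then have "emeasure lambda_T S = emeasure ?U (cis -` S \<inter> space ?U)"
    unfolding lambda_T_def using assms by (rule emeasure_distr)
  also have "\<dots> = emeasure lborel ({0..<2 * pi} \<inter> cis -` S) / ennreal (2 * pi)"
    using measurable_sets_borel[OF cis_borel assms] by simp
  finally show ?thesis .
qed

lemma cis_arg02pi: "cis (arg02pi z) = cis (Arg z)"
  by (simp add: arg02pi_def cis.ctr complex_eq_iff)

lemma arg02pi_bounds: "0 \<le> arg02pi z" "arg02pi z \<le> 2 * pi"
  using Arg_bounded[of z] by (auto simp: arg02pi_def)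

lemma emeasure_lambda_T_vimage_mult:
  assumes c: "norm c = 1" and S: "S \<in> sets borel"
  shows "emeasure lambda_T ((*) c -` S) = emeasure lambda_T S"
proof -
  define a where "a = arg02pi c"
  have "c \<noteq> 0" using c by auto
  then have "cis a = c"
    using c by (simp add: a_def cis_arg02pi cis_Arg sgn_eq)
  define B where "B = cis -` S"
  have B: "B \<in> sets borel"
    unfolding B_def
    by (intro measurable_sets_borel[OF _ S] borel_measurable_continuous_onI continuous_on_cis
        continuous_on_id)
  have periodic: "t \<in> B \<longleftrightarrow> t + 2 * pi \<in> B" for t
    by (simp add: B_def cis.ctr)
  have "cis -` ((*) c -` S) = {t. a + t \<in> B}"
    by (auto simp: B_def \<open>cis a = c\<close>[symmetric] cis_mult)
  moreover have "(*) c -` S \<in> sets borel"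
    by (intro measurable_sets_borel[OF _ S]) measurable
  ultimately show ?thesis
    using emeasure_lborel_periodic_shift[OF B periodic arg02pi_bounds]
    by (simp add: emeasure_lambda_T S a_def B_def)
qed

definition transport_cost :: "real \<Rightarrow> (complex \<times> complex) measure \<Rightarrow> ennreal" where
  "transport_cost p \<theta> = (\<integral>\<^sup>+ zw. ennreal (circ_dist (fst zw) (snd zw) powr p) \<partial>\<theta>)"

lemma product_in_sets_borel:
  fixes S :: "'a::second_countable_topology set" and T :: "'b::second_countable_topology set"
  shows "S \<in> sets borel \<Longrightarrow> T \<in> sets borel \<Longrightarrow> S \<times> T \<in> sets borel"
  using pair_measureI[of S borel T borel] unfolding borel_prod by simp

lemma borel_measurable_map_prod_mult:
  "map_prod ((*) c) ((*) c) \<in> borel \<rightarrow>\<^sub>M (borel :: (complex \<times> complex) measure)"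
proof -
  have "map_prod ((*) c) ((*) c) = (\<lambda>p::complex \<times> complex. (c * fst p, c * snd p))"
    by auto
  then show ?thesis
    by (simp add: borel_measurable_continuous_onI continuous_intros)
qed

lemma couplings_distr_rotate:
  assumes c: "norm c = 1" and \<theta>: "\<theta> \<in> couplings (measure_pmf q) lambda_T"
  shows "distr \<theta> borel (map_prod ((*) c) ((*) c))
    \<in> couplings (measure_pmf (map_pmf ((*) c) q)) lambda_T"
  unfolding couplings_def
proof (intro CollectI conjI ballI)
  let ?R = "map_prod ((*) c) ((*) c) :: complex \<times> complex \<Rightarrow> _"
  have sets_\<theta>: "sets \<theta> = sets borel" and "prob_space \<theta>"
    and marginals: "\<And>S. S \<in> sets borel \<Longrightarrow> emeasure \<theta> (S \<times> UNIV) = emeasure (measure_pmf q) S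
      \<and> emeasure \<theta> (UNIV \<times> S) = emeasure lambda_T S"
    using \<theta> unfolding couplings_def by auto
  have space_\<theta>: "space \<theta> = UNIV"
    using sets_eq_imp_space_eq[OF sets_\<theta>] by simp
  have R: "?R \<in> \<theta> \<rightarrow>\<^sub>M borel"
    by (simp add: measurable_cong_sets[OF sets_\<theta> refl] borel_measurable_map_prod_mult)
  show "sets (distr \<theta> borel ?R) = sets borel" by simp
  show "prob_space (distr \<theta> borel ?R)" by (rule prob_space.prob_space_distr[OF \<open>prob_space \<theta>\<close> R])
  fix S :: "complex set" assume S: "S \<in> sets borel"
  have cS: "(*) c -` S \<in> sets borel"
    by (intro measurable_sets_borel[OF _ S]) measurable
  have "emeasure (distr \<theta> borel ?R) (S \<times> UNIV) = emeasure \<theta> (?R -` (S \<times> UNIV) \<inter> space \<theta>)"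
    using S by (simp add: emeasure_distr[OF R] product_in_sets_borel)
  also have "?R -` (S \<times> UNIV) \<inter> space \<theta> = (*) c -` S \<times> UNIV"
    by (auto simp: space_\<theta>)
  also have "emeasure \<theta> \<dots> = emeasure (measure_pmf (map_pmf ((*) c) q)) S"
    using marginals[OF cS] by simp
  finally show "emeasure (distr \<theta> borel ?R) (S \<times> UNIV)
      = emeasure (measure_pmf (map_pmf ((*) c) q)) S" .
  have "emeasure (distr \<theta> borel ?R) (UNIV \<times> S) = emeasure \<theta> (?R -` (UNIV \<times> S) \<inter> space \<theta>)"
    using S by (simp add: emeasure_distr[OF R] product_in_sets_borel)
  also have "?R -` (UNIV \<times> S) \<inter> space \<theta> = UNIV \<times> (*) c -` S"
    by (auto simp: space_\<theta>)
  also have "emeasure \<theta> \<dots> = emeasure lambda_T S"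
    using marginals[OF cS] emeasure_lambda_T_vimage_mult[OF c S] by simp
  finally show "emeasure (distr \<theta> borel ?R) (UNIV \<times> S) = emeasure lambda_T S" .
qed

lemma transport_cost_distr_rotate:
  assumes c: "norm c = 1" and sets_\<theta>: "sets \<theta> = sets borel"
  shows "transport_cost p (distr \<theta> borel (map_prod ((*) c) ((*) c))) = transport_cost p \<theta>"
proof -
  have "map_prod ((*) c) ((*) c) \<in> \<theta> \<rightarrow>\<^sub>M borel"
    by (simp add: measurable_cong_sets[OF sets_\<theta> refl] borel_measurable_map_prod_mult)
  then show ?thesis
    unfolding transport_cost_def
    by (subst nn_integral_distr) (simp_all add: circ_dist_mult_left[OF c])
qed

lemma transport_cost_INF_rotate_le:
  assumes c: "norm c = 1"
  shows "(INF \<theta>\<in>couplings (measure_pmf (map_pmf ((*) c) q)) lambda_T. transport_cost p \<theta>)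
      \<le> (INF \<theta>\<in>couplings (measure_pmf q) lambda_T. transport_cost p \<theta>)"
proof (rule INF_mono)
  fix \<theta> assume \<theta>: "\<theta> \<in> couplings (measure_pmf q) lambda_T"
  then have "sets \<theta> = sets borel" by (simp add: couplings_def)
  then show "\<exists>\<theta>'\<in>couplings (measure_pmf (map_pmf ((*) c) q)) lambda_T.
      transport_cost p \<theta>' \<le> transport_cost p \<theta>"
    using couplings_distr_rotate[OF c \<theta>] transport_cost_distr_rotate[OF c] by (metis order_refl)
qed

lemma wasserstein_map_pmf_rotate:
  assumes c: "norm c = 1"
  shows "wasserstein p (measure_pmf (map_pmf ((*) c) q)) lambda_T
    = wasserstein p (measure_pmf q) lambda_T"
proof -
  have "cnj c * c = 1"
    using c by (metis complex_norm_square mult.commute norm_one of_real_1 power_one)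
  then have "map_pmf ((*) (cnj c)) (map_pmf ((*) c) q) = q"
    by (simp add: map_pmf_comp mult.assoc[symmetric])
  then have "(INF \<theta>\<in>couplings (measure_pmf q) lambda_T. transport_cost p \<theta>)
      \<le> (INF \<theta>\<in>couplings (measure_pmf (map_pmf ((*) c) q)) lambda_T. transport_cost p \<theta>)"
    using transport_cost_INF_rotate_le[where c = "cnj c" and q = "map_pmf ((*) c) q"] c by simp
  with transport_cost_INF_rotate_le[OF c, where q = q and p = p]
  have "(INF \<theta>\<in>couplings (measure_pmf (map_pmf ((*) c) q)) lambda_T. transport_cost p \<theta>)
      = (INF \<theta>\<in>couplings (measure_pmf q) lambda_T. transport_cost p \<theta>)"
    by (rule antisym)
  then show ?thesis unfolding wasserstein_def transport_cost_def[symmetric] by simp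
qed

section \<open>The unitary groups\<close>

lemma conj_transpose_mult: "conj_transpose (A ** B) = conj_transpose B ** conj_transpose A"
  by (simp add: conj_transpose_def matrix_matrix_mult_def vec_eq_iff mult.commute)

lemma conj_transpose_conj_transpose [simp]: "conj_transpose (conj_transpose A) = A"
  by (simp add: conj_transpose_def vec_eq_iff)

lemma det_conj_transpose: "det (conj_transpose A) = cnj (det A)"
proof -
  have "conj_transpose A = transpose (\<chi> i j. cnj (A $ i $ j))"
    by (simp add: conj_transpose_def transpose_def vec_eq_iff)
  then have "det (conj_transpose A) = det (\<chi> i j. cnj (A $ i $ j))"
    by simp
  also have "\<dots> = cnj (det A)"
    unfolding det_def by (simp add: cnj_sum cnj_prod)
  finally show ?thesis .
qed

lemma continuous_on_conj_transpose: "continuous_on UNIV conj_transpose"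
  unfolding conj_transpose_def by (intro continuous_intros)

lemma matrix_scale_mult_conj_transpose:
  "matrix_scale c A ** conj_transpose (matrix_scale c A)
    = matrix_scale (c * cnj c) (A ** conj_transpose A)"
  by (simp add: matrix_scale_def conj_transpose_def matrix_matrix_mult_def vec_eq_iff
      sum_distrib_left algebra_simps)

lemma unitary_group_mult_closed:
  assumes "A \<in> unitary_group" "B \<in> unitary_group"
  shows "A ** B \<in> unitary_group"
proof -
  have "(A ** B) ** conj_transpose (A ** B) = A ** (B ** conj_transpose B) ** conj_transpose A"
    by (simp add: conj_transpose_mult matrix_mul_assoc)
  then show ?thesis using assms by (simp add: unitary_group_def)
qed

lemma conj_transpose_in_unitary_group: "A \<in> unitary_group \<Longrightarrow> conj_transpose A \<in> unitary_group"
  unfolding unitary_group_def using matrix_left_right_inverse by auto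

lemma norm_det_unitary: "A \<in> unitary_group \<Longrightarrow> norm (det A) = 1"
proof -
  assume "A \<in> unitary_group"
  then have "det (A ** conj_transpose A) = det (mat 1 :: complex^'n^'n)"
    by (simp add: unitary_group_def)
  then have "det A * cnj (det A) = 1"
    by (simp add: det_mul det_conj_transpose)
  then have "norm (det A) ^ 2 = 1"
    by (metis complex_norm_square norm_one of_real_eq_1_iff)
  then show ?thesis using norm_ge_zero[of "det A"] by (auto simp: power2_eq_1_iff)
qed

lemma matrix_scale_in_unitary_group:
  assumes "norm c = 1" "A \<in> unitary_group"
  shows "matrix_scale c A \<in> unitary_group"
proof -
  have "c * cnj c = 1"
    using assms(1) by (metis complex_norm_square norm_one of_real_1 power_one)
  then show ?thesis
    using assms(2) by (simp add: unitary_group_def matrix_scale_mult_conj_transpose)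
qed

lemma special_unitary_group_eq: "special_unitary_group = {A \<in> unitary_group. det A = 1}"
  by (simp add: special_unitary_group_def unitary_group_def)

interpretation special_unitary: matrix_group special_unitary_group conj_transpose
proof
  fix A B :: "complex^'n^'n"
  show "A \<in> special_unitary_group \<Longrightarrow> B \<in> special_unitary_group \<Longrightarrow> A ** B \<in> special_unitary_group"
    by (simp add: special_unitary_group_eq unitary_group_mult_closed det_mul)
  show "A \<in> special_unitary_group \<Longrightarrow> conj_transpose A \<in> special_unitary_group"
    by (simp add: special_unitary_group_eq conj_transpose_in_unitary_group det_conj_transpose)
qed (simp_all add: conj_transpose_mult continuous_on_conj_transpose)

definition unitary_det_normalize :: "complex^'n^'n \<Rightarrow> complex^'n^'n" where
  "unitary_det_normalize A = matrix_scale (cis (- Arg (det A) / CARD('n))) A"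

lemma unitary_det_normalize_in_special_unitary_group:
  fixes A :: "complex^'n^'n"
  assumes A: "A \<in> unitary_group"
  shows "unitary_det_normalize A \<in> special_unitary_group"
proof -
  have "det A \<noteq> 0" using norm_det_unitary[OF A] by auto
  then have det_A: "cis (Arg (det A)) = det A"
    using norm_det_unitary[OF A] by (simp add: cis_Arg sgn_eq)
  have "cis (- Arg (det A) / CARD('n)) ^ CARD('n) = cis (CARD('n) * (- Arg (det A) / CARD('n)))"
    by (rule Complex.DeMoivre)
  then have "det (unitary_det_normalize A) = cis (- Arg (det A)) * det A"
    by (simp add: unitary_det_normalize_def det_matrix_scale)
  also have "\<dots> = cis (- Arg (det A)) * cis (Arg (det A))"
    by (simp add: det_A)
  also have "\<dots> = 1"
    by (simp add: cis_mult)
  finally have "det (unitary_det_normalize A) = 1" .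
  moreover have "unitary_det_normalize A \<in> unitary_group"
    unfolding unitary_det_normalize_def by (rule matrix_scale_in_unitary_group[OF _ A]) simp
  ultimately show ?thesis
    by (simp add: special_unitary_group_eq)
qed

lemma unitary_det_normalize_special_unitary:
  "A \<in> special_unitary_group \<Longrightarrow> unitary_det_normalize A = A"
  by (simp add: unitary_det_normalize_def special_unitary_group_def)

lemma unitary_det_normalize_mult:
  "g \<in> special_unitary_group \<Longrightarrow> unitary_det_normalize (g ** A) = g ** unitary_det_normalize A"
  by (simp add: unitary_det_normalize_def special_unitary_group_def det_mul
      matrix_mult_matrix_scale)

lemma measurable_unitary_det_normalize:
  "unitary_det_normalize
    \<in> restrict_space borel unitary_group \<rightarrow>\<^sub>M restrict_space borel special_unitary_group"
proof (rule measurable_restrict_space3)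
  have "det \<in> borel_measurable (borel :: (complex^'n^'n) measure)"
    by (rule borel_measurable_continuous_onI[OF continuous_on_det])
  from measurable_compose[OF this borel_measurable_Arg]
  have "(\<lambda>A :: complex^'n^'n. - Arg (det A) / CARD('n)) \<in> borel_measurable borel"
    by measurable
  moreover have "cis \<in> borel_measurable borel"
    by (intro borel_measurable_continuous_onI continuous_on_cis continuous_on_id)
  ultimately have "(\<lambda>A :: complex^'n^'n. cis (- Arg (det A) / CARD('n))) \<in> borel_measurable borel"
    by (rule measurable_compose)
  then show "unitary_det_normalize \<in> borel_measurable borel"
    unfolding unitary_det_normalize_def[abs_def] by (rule borel_measurable_matrix_scale)
qed (auto intro: unitary_det_normalize_in_special_unitary_group)

lemma spec_measure_U_matrix_scale:
  assumes "c \<noteq> 0"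
  shows "spec_measure_U (matrix_scale c A)
    = measure_pmf (map_pmf ((*) c) (pmf_of_multiset (eigen_mset A)))"
proof -
  have "eigen_mset A \<noteq> {#}"
    using size_eigen_mset[of A] by auto
  then show ?thesis
    using assms by (simp add: spec_measure_U_def eigen_mset_matrix_scale map_pmf_of_multiset)
qed

lemma distr_wasserstein_spec_measure_U_eq:
  fixes MU MSU :: "(complex^'n^'n) measure"
  assumes "haar_measure_on unitary_group MU" "haar_measure_on special_unitary_group MSU"
  shows "distr MU borel (\<lambda>A. wasserstein p (spec_measure_U A) lambda_T)
       = distr MSU borel (\<lambda>A. wasserstein p (spec_measure_U A) lambda_T)"
proof (rule special_unitary.distr_haar_eq_of_equivariant_retraction[OF assms])
  show "special_unitary_group \<subseteq> unitary_group"
    by (auto simp: special_unitary_group_eq)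
  show "wasserstein p (spec_measure_U (unitary_det_normalize A)) lambda_T
      = wasserstein p (spec_measure_U A) lambda_T" for A :: "complex^'n^'n"
  proof -
    let ?c = "cis (- Arg (det A) / CARD('n))"
    have "spec_measure_U (unitary_det_normalize A)
        = measure_pmf (map_pmf ((*) ?c) (pmf_of_multiset (eigen_mset A)))"
      unfolding unitary_det_normalize_def by (rule spec_measure_U_matrix_scale) simp
    then show ?thesis
      using wasserstein_map_pmf_rotate[of ?c p "pmf_of_multiset (eigen_mset A)"]
      by (simp add: spec_measure_U_def)
  qed
qed (simp_all add: unitary_group_mult_closed measurable_unitary_det_normalize
      unitary_det_normalize_special_unitary unitary_det_normalize_mult)

section \<open>The orthogonal groups\<close>

lemma orthogonal_group_eq: "orthogonal_group = {A. orthogonal_matrix A}"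
  by (simp add: orthogonal_group_def orthogonal_matrix)

lemma special_orthogonal_group_eq: "special_orthogonal_group = {A. rotation_matrix A}"
  by (simp add: special_orthogonal_group_def rotation_matrix_def orthogonal_matrix)

lemma continuous_on_transpose: "continuous_on UNIV (transpose :: 'a::real_normed_vector^'n^'n \<Rightarrow> _)"
  unfolding transpose_def by (intro continuous_intros)

interpretation special_orthogonal: matrix_group special_orthogonal_group transpose
proof
  fix A B :: "real^'n^'n"
  show "A \<in> special_orthogonal_group \<Longrightarrow> B \<in> special_orthogonal_group
      \<Longrightarrow> A ** B \<in> special_orthogonal_group"
    by (simp add: special_orthogonal_group_eq rotation_matrix_def orthogonal_matrix_mul det_mul)
  show "A \<in> special_orthogonal_group \<Longrightarrow> transpose A \<in> special_orthogonal_group"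
    by (simp add: special_orthogonal_group_eq rotation_matrix_def)
qed (simp_all add: matrix_transpose_mul continuous_on_transpose)

definition orthogonal_det_normalize :: "real^'n^'n \<Rightarrow> real^'n^'n" where
  "orthogonal_det_normalize A = matrix_scale (det A) A"

lemma orthogonal_det_normalize_in_special_orthogonal_group:
  fixes A :: "real^'n^'n"
  assumes A: "orthogonal_matrix A" and odd: "odd CARD('n)"
  shows "orthogonal_det_normalize A \<in> special_orthogonal_group"
proof -
  have det_A: "det A = 1 \<or> det A = -1"
    by (rule det_orthogonal_matrix[OF A])
  then have "det (orthogonal_det_normalize A) = 1"
    using odd by (auto simp: orthogonal_det_normalize_def det_matrix_scale)
  moreover have "orthogonal_matrix (orthogonal_det_normalize A)"
    using A det_A
    by (auto simp: orthogonal_matrix orthogonal_det_normalize_def transpose_matrix_scale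
        matrix_scale_mult_matrix_scale)
  ultimately show ?thesis
    by (simp add: special_orthogonal_group_eq rotation_matrix_def)
qed

text \<open>Without 2 \<le> CARD('n) the multiset could be empty, and pmf_of_multiset {#} is a junk value.\<close>

lemma spec_measure_O_orthogonal_det_normalize:
  fixes A :: "real^'n^'n"
  assumes det_A: "det A = -1" and odd: "odd CARD('n)" and "2 \<le> CARD('n)"
  shows "spec_measure_O (orthogonal_det_normalize A)
    = measure_pmf (map_pmf ((*) (-1)) (pmf_of_multiset (eigen_mset (complexify A) - {#- 1#})))"
proof -
  define E where "E = eigen_mset (complexify A)"
  have "E - {#- 1#} \<noteq> {#}"
    using size_eigen_mset[of "complexify A"] \<open>2 \<le> CARD('n)\<close> size_Diff_singleton_if[of E "-1"]
    by (auto simp: E_def split: if_splits)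
  moreover have "det (orthogonal_det_normalize A) = 1"
    using det_A odd by (simp add: orthogonal_det_normalize_def det_matrix_scale)
  moreover have "eigen_mset (complexify (orthogonal_det_normalize A)) = image_mset ((*) (-1)) E"
    by (simp add: orthogonal_det_normalize_def det_A complexify_matrix_scale
        eigen_mset_matrix_scale E_def)
  moreover have "image_mset ((*) (-1)) E - {#1#} = image_mset ((*) (-1)) (E - {#- 1#})"
    using image_mset_diff_if_inj[of "(*) (-1 :: complex)" E "{#- 1#}"] by (simp add: inj_on_def)
  ultimately show ?thesis
    by (simp add: spec_measure_O_def map_pmf_of_multiset E_def)
qed

lemma wasserstein_spec_measure_O_orthogonal_det_normalize:
  fixes A :: "real^'n^'n"
  assumes A: "orthogonal_matrix A" and "odd CARD('n)" "2 \<le> CARD('n)"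
  shows "wasserstein p (spec_measure_O (orthogonal_det_normalize A)) lambda_T
    = wasserstein p (spec_measure_O A) lambda_T"
proof (cases "det A = 1")
  case True
  then show ?thesis by (simp add: orthogonal_det_normalize_def)
next
  case False
  then have "det A = -1"
    using det_orthogonal_matrix[OF A] by simp
  then have "spec_measure_O A = measure_pmf (pmf_of_multiset (eigen_mset (complexify A) - {#- 1#}))"
    by (simp add: spec_measure_O_def)
  with spec_measure_O_orthogonal_det_normalize[OF \<open>det A = -1\<close> assms(2,3)]
    and wasserstein_map_pmf_rotate[of "-1" p "pmf_of_multiset (eigen_mset (complexify A) - {#- 1#})"]
  show ?thesis by simp
qed

lemma distr_wasserstein_spec_measure_O_eq:
  fixes MO MSO :: "(real^'n^'n) measure"
  assumes "haar_measure_on orthogonal_group MO" "haar_measure_on special_orthogonal_group MSO"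
    and "odd CARD('n)" "2 \<le> CARD('n)"
  shows "distr MO borel (\<lambda>A. wasserstein p (spec_measure_O A) lambda_T)
       = distr MSO borel (\<lambda>A. wasserstein p (spec_measure_O A) lambda_T)"
proof (rule special_orthogonal.distr_haar_eq_of_equivariant_retraction[OF assms(1,2)])
  show "special_orthogonal_group \<subseteq> orthogonal_group"
    by (auto simp: special_orthogonal_group_eq orthogonal_group_eq rotation_matrix_def)
  show "A ** B \<in> orthogonal_group"
    if "A \<in> orthogonal_group" "B \<in> orthogonal_group" for A B :: "real^'n^'n"
    using that by (simp add: orthogonal_group_eq orthogonal_matrix_mul)
  have "orthogonal_det_normalize \<in> borel_measurable (borel :: (real^'n^'n) measure)"
    unfolding orthogonal_det_normalize_def[abs_def]
    by (intro borel_measurable_matrix_scale borel_measurable_continuous_onI continuous_on_det)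
  then show "(orthogonal_det_normalize :: real^'n^'n \<Rightarrow> _) \<in> restrict_space borel orthogonal_group
      \<rightarrow>\<^sub>M restrict_space borel special_orthogonal_group"
    using orthogonal_det_normalize_in_special_orthogonal_group assms(3)
    by (intro measurable_restrict_space3) (auto simp: orthogonal_group_eq)
  show "orthogonal_det_normalize A = A" if "A \<in> special_orthogonal_group" for A :: "real^'n^'n"
    using that by (simp add: orthogonal_det_normalize_def special_orthogonal_group_def)
  show "orthogonal_det_normalize (g ** A) = g ** orthogonal_det_normalize A"
    if "g \<in> special_orthogonal_group" for g A :: "real^'n^'n"
    using that by (simp add: orthogonal_det_normalize_def special_orthogonal_group_def det_mul
        matrix_mult_matrix_scale)
  show "wasserstein p (spec_measure_O (orthogonal_det_normalize A)) lambda_T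
      = wasserstein p (spec_measure_O A) lambda_T" if "A \<in> orthogonal_group" for A :: "real^'n^'n"
    using that assms(3,4)
    by (intro wasserstein_spec_measure_O_orthogonal_det_normalize)
      (simp_all add: orthogonal_group_eq)
qed

theorem lemma3:
  fixes p :: real and N :: nat
    and MU :: "(complex^'n^'n) measure" and MSU :: "(complex^'n^'n) measure"
    and MO :: "(real^'m^'m) measure" and MSO :: "(real^'m^'m) measure"
  assumes "1 \<le> p" and "1 \<le> N"
    and "CARD('n) = N" and "CARD('m) = 2 * N + 1"
    and "haar_measure_on unitary_group MU"
    and "haar_measure_on special_unitary_group MSU"
    and "haar_measure_on orthogonal_group MO"
    and "haar_measure_on special_orthogonal_group MSO"
  shows "distr MU borel (\<lambda>A. wasserstein p (spec_measure_U A) lambda_T)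
           = distr MSU borel (\<lambda>A. wasserstein p (spec_measure_U A) lambda_T)
       \<and> distr MO borel (\<lambda>A. wasserstein p (spec_measure_O A) lambda_T)
           = distr MSO borel (\<lambda>A. wasserstein p (spec_measure_O A) lambda_T)"
proof
  show "distr MU borel (\<lambda>A. wasserstein p (spec_measure_U A) lambda_T)
      = distr MSU borel (\<lambda>A. wasserstein p (spec_measure_U A) lambda_T)"
    using assms(5,6) by (rule distr_wasserstein_spec_measure_U_eq)
  have "odd CARD('m)" "2 \<le> CARD('m)"
    using assms(2,4) by auto
  with assms(7,8) show "distr MO borel (\<lambda>A. wasserstein p (spec_measure_O A) lambda_T)
      = distr MSO borel (\<lambda>A. wasserstein p (spec_measure_O A) lambda_T)"
    by (rule distr_wasserstein_spec_measure_O_eq)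
qed

end
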